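(* Let $\rho>1$ and $a,b>0$. Let $(\lambda_k)_{k\in\mathbb{N}}$ be a strictly increasing sequence of positive real numbers such that $$\liminf_{k\to\infty}\frac{\lambda_k}{k^{1/\rho}}<\Big(\frac{2}{b\rho e}\Big)^{1/\rho},$$ and let $\Lambda=\{\pm\lambda_k:k\in\mathbb{N}\}\subset\mathbb{R}$. Then $\Lambda$ is a uniqueness set for $\mathfrak{G}_{a,b,\rho}$: if $f\in\mathfrak{G}_{a,b,\rho}$ and $f(\lambda)=0$ for all $\lambda\in\Lambda$, then $f\equiv 0$ on $\mathbb{C}$.
   Context: For $\rho>1$ and $a,b>0$, $\mathfrak{G}_{a,b,\rho}$ is the set of entire functions $f$ for which there is a constant $C>0$ with $|f(x+iy)|\le Ce^{-a|x|^\rho+b|y|^\rho}$ for all $x,y\in\mathbb{R}$. A set $\Lambda\subset\mathbb{C}$ is a uniqueness set for a linear space $U$ of entire functions if every $f\in U$ vanishing on $\Lambda$ is identically zero. *)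

theory Defs
  imports "HOL-Analysis.Analysis" "HOL-Complex_Analysis.Complex_Analysis"
begin

definition G_space :: "real \<Rightarrow> real \<Rightarrow> real \<Rightarrow> (complex \<Rightarrow> complex) set" where
  "G_space a b \<rho> = {f. f holomorphic_on UNIV \<and>
     (\<exists>C>0. \<forall>x y::real. norm (f (Complex x y)) \<le> C * exp (- a * \<bar>x\<bar> powr \<rho> + b * \<bar>y\<bar> powr \<rho>))}"

definition uniqueness_set :: "complex set \<Rightarrow> (complex \<Rightarrow> complex) set \<Rightarrow> bool" where
  "uniqueness_set \<Lambda> U \<longleftrightarrow> (\<forall>f\<in>U. (\<forall>z\<in>\<Lambda>. f z = 0) \<longrightarrow> (\<forall>z. f z = 0))"

end

theory Submission
  imports Defs "HOL-Real_Asymp.Real_Asymp"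
begin

text \<open>Only the bound |f z| \<le> C exp (b |z|^\<rho>) is used. Dividing out the zero of f at the
  origin leaves an entire F with F 0 \<noteq> 0 and F z = f z / z^m. The 2(k+1) zeros \<plusminus>\<lambda>_j, j \<le> k,
  lie in the disc of radius \<lambda>_k; removing them by Blaschke factors for the circle of radius
  R = e^(1/\<rho>) \<lambda>_k gives |F 0| e^(2(k+1)/\<rho>) \<le> C exp (b e \<lambda>_k^\<rho>) / R^m. If \<lambda>_k < c k^(1/\<rho>)
  infinitely often with b e c^\<rho> < 2/\<rho>, the left side outgrows the right.\<close>

lemma norm_center_mult_prod_zeros_le:
  fixes F :: "complex \<Rightarrow> complex"
  assumes "F holomorphic_on cball 0 R" "R > 0" "finite Z"
    and "\<forall>w\<in>Z. F w = 0" "\<forall>w\<in>Z. 0 < norm w \<and> norm w < R"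
    and "\<forall>z. norm z = R \<longrightarrow> norm (F z) \<le> M"
  shows "norm (F 0) * (\<Prod>w\<in>Z. R / norm w) \<le> M"
  using assms(3,1,4-)
proof (induction Z arbitrary: F rule: finite_induct)
  case empty
  have "norm ((deriv ^^ 0) F 0) \<le> fact 0 * M / R ^ 0"
    using empty.prems \<open>R > 0\<close>
    by (intro Cauchy_inequality) (auto intro: holomorphic_on_subset holomorphic_on_imp_continuous_on)
  then show ?case by simp
next
  case (insert w Z)
  have Fw: "F w = 0" and w: "0 < norm w" "norm w < R"
    using insert.prems by auto
  \<comment> \<open>Dividing by the Blaschke factor of w removes the zero w, keeps the modulus on the circle
    and multiplies the modulus at the center by R / norm w.\<close>
  define G where "G z = (if z = w then deriv F w else (F z - F w) / (z - w))
      * ((of_real R ^ 2 - cnj w * z) / of_real R)" for z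
  have "G holomorphic_on cball 0 R"
    unfolding G_def using w by (intro holomorphic_intros pole_lemma[OF insert.prems(1)]) auto
  moreover have "\<forall>u\<in>Z. G u = 0"
    using insert Fw unfolding G_def by auto
  moreover have "norm (G z) \<le> M" if "norm z = R" for z
  proof -
    have "(of_real R ^ 2 :: complex) = z * cnj z"
      using complex_norm_square[of z] that by simp
    then have "of_real R ^ 2 - cnj w * z = z * cnj (z - w)"
      by (simp add: algebra_simps)
    then have "norm (of_real R ^ 2 - cnj w * z) = R * norm (z - w)"
      using that by (metis complex_mod_cnj norm_mult)
    moreover have "z \<noteq> w" using that w by auto
    ultimately have "norm (G z) = norm (F z)"
      using Fw \<open>R > 0\<close> unfolding G_def by (simp add: norm_mult norm_divide)
    then show ?thesis using insert.prems that by auto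
  qed
  ultimately have "norm (G 0) * (\<Prod>u\<in>Z. R / norm u) \<le> M"
    using insert.IH insert.prems by blast
  moreover have "norm (G 0) = norm (F 0) * (R / norm w)"
    using w Fw \<open>R > 0\<close> unfolding G_def by (simp add: norm_mult norm_divide power2_eq_square)
  ultimately show ?case
    using insert by (simp add: mult.assoc)
qed

lemma entire_divide_zero_power:
  fixes f :: "complex \<Rightarrow> complex"
  assumes "f holomorphic_on UNIV" "\<exists>w. f w \<noteq> 0"
  obtains m F where "F holomorphic_on UNIV" "F \<xi> \<noteq> 0" "\<forall>z. z \<noteq> \<xi> \<longrightarrow> F z = f z / (z - \<xi>) ^ m"
proof -
  obtain r g m where r: "r > 0" "g holomorphic_on cball \<xi> r"
     "\<forall>w\<in>cball \<xi> r. f w = g w * (w - \<xi>) ^ m \<and> g w \<noteq> 0"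
    using zorder_exist_zero[OF assms(1) open_UNIV connected_UNIV, of \<xi>] assms(2) by auto
  define F where "F z = (if z = \<xi> then g \<xi> else f z / (z - \<xi>) ^ m)" for z
  have "F holomorphic_on (ball \<xi> r \<union> - {\<xi>})"
  proof (rule holomorphic_on_Un)
    show "F holomorphic_on ball \<xi> r"
      by (rule holomorphic_transform[of g]) (use r in \<open>auto simp: F_def intro: holomorphic_on_subset\<close>)
    show "F holomorphic_on - {\<xi>}"
      by (rule holomorphic_transform[of "\<lambda>z. f z / (z - \<xi>) ^ m"])
         (auto simp: F_def intro!: holomorphic_intros intro: holomorphic_on_subset[OF assms(1)])
  qed auto
  moreover have "ball \<xi> r \<union> - {\<xi>} = UNIV" using r by auto
  ultimately have "F holomorphic_on UNIV" by metis
  moreover have "F \<xi> \<noteq> 0" using r by (auto simp: F_def)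
  moreover have "\<forall>z. z \<noteq> \<xi> \<longrightarrow> F z = f z / (z - \<xi>) ^ m" by (simp add: F_def)
  ultimately show ?thesis using that by blast
qed

lemma card_signed_image:
  fixes lam :: "'a \<Rightarrow> real"
  assumes "inj_on lam A" "\<forall>j\<in>A. lam j > 0"
  shows "card ((\<lambda>(s, j). complex_of_real (s * lam j)) ` ({-1, 1} \<times> A)) = 2 * card A"
proof -
  have "inj_on (\<lambda>(s, j). complex_of_real (s * lam j)) ({-1, 1} \<times> A)"
  proof (rule inj_onI, clarify)
    fix s i s' j
    assume s: "s \<in> {-1, 1}" "s' \<in> {-1, 1}" and ij: "i \<in> A" "j \<in> A"
      and "complex_of_real (s * lam i) = complex_of_real (s' * lam j)"
    then have eq: "s * lam i = s' * lam j" by (simp only: of_real_eq_iff)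
    have pos: "lam i > 0" "lam j > 0" using ij assms(2) by auto
    have "\<bar>s * lam i\<bar> = \<bar>s' * lam j\<bar>" using eq by simp
    then have "lam i = lam j" using s pos by (auto simp: abs_mult)
    then have "i = j" using ij assms(1) by (simp add: inj_on_eq_iff)
    then show "s = s' \<and> i = j" using eq pos by auto
  qed
  then show ?thesis
    by (simp add: card_image card_cartesian_product)
qed

lemma norm_center_power_le_of_signed_zeros:
  fixes f F :: "complex \<Rightarrow> complex" and lam :: "nat \<Rightarrow> real"
  assumes F: "F holomorphic_on UNIV" "\<forall>z. z \<noteq> 0 \<longrightarrow> F z = f z / z ^ m"
    and lam: "strict_mono lam" "\<forall>j. lam j > 0"
    and zeros: "\<forall>s\<in>{-1, 1}. \<forall>j. f (of_real (s * lam j)) = 0"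
    and growth: "\<forall>z. norm (f z) \<le> C * exp (b * norm z powr \<rho>)"
    and "t > 1"
  shows "norm (F 0) * t ^ (2 * (k + 1)) \<le> C * exp (b * (t * lam k) powr \<rho>) / (t * lam k) ^ m"
proof -
  define R where "R = t * lam k"
  define Z where "Z = (\<lambda>(s, j). complex_of_real (s * lam j)) ` ({-1, 1} \<times> {..k})"
  have "R > 0" using \<open>t > 1\<close> lam(2) by (simp add: R_def)
  have Z: "f w = 0 \<and> 0 < norm w \<and> norm w \<le> lam k" if wZ: "w \<in> Z" for w
  proof -
    obtain s j where sj: "s \<in> {-1, 1}" "j \<le> k" "w = of_real (s * lam j)"
      using wZ unfolding Z_def by (elim imageE) (auto simp del: of_real_mult)
    have "lam j > 0" using lam(2) by simp
    then have "norm w = lam j"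
      using sj by (auto simp: abs_mult)
    moreover have "lam j \<le> lam k"
      using lam(1) sj(2) by (simp add: strict_mono_less_eq)
    ultimately show ?thesis
      using zeros sj lam(2) by auto
  qed
  have "\<forall>w\<in>Z. F w = 0"
    using Z F(2) by force
  moreover have "\<forall>w\<in>Z. 0 < norm w \<and> norm w < R"
  proof -
    have "lam k < R" using \<open>t > 1\<close> lam(2) by (simp add: R_def)
    then show ?thesis using Z by fastforce
  qed
  moreover have "\<forall>z. norm z = R \<longrightarrow> norm (F z) \<le> C * exp (b * R powr \<rho>) / R ^ m"
  proof (intro allI impI)
    fix z :: complex
    assume "norm z = R"
    then have "norm (F z) = norm (f z) / R ^ m"
      using F(2) \<open>R > 0\<close> by (auto simp: norm_divide norm_power)
    also have "\<dots> \<le> C * exp (b * R powr \<rho>) / R ^ m"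
      using growth \<open>norm z = R\<close> \<open>R > 0\<close> by (metis divide_right_mono zero_le_power less_imp_le)
    finally show "norm (F z) \<le> C * exp (b * R powr \<rho>) / R ^ m" .
  qed
  moreover have "F holomorphic_on cball 0 R" "finite Z"
    using F(1) by (auto simp: Z_def intro: holomorphic_on_subset)
  ultimately have "norm (F 0) * (\<Prod>w\<in>Z. R / norm w) \<le> C * exp (b * R powr \<rho>) / R ^ m"
    using norm_center_mult_prod_zeros_le \<open>R > 0\<close> by blast
  moreover have "t ^ (2 * (k + 1)) \<le> (\<Prod>w\<in>Z. R / norm w)"
  proof -
    have "card Z = 2 * (k + 1)"
      unfolding Z_def using card_signed_image[OF strict_mono_imp_inj_on[OF lam(1)]] lam(2) by simp
    then have "t ^ (2 * (k + 1)) = (\<Prod>w\<in>Z. t)" by simp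
    also have "\<dots> \<le> (\<Prod>w\<in>Z. R / norm w)"
      using Z \<open>t > 1\<close> lam(2) by (intro prod_mono) (auto simp: R_def le_divide_eq mult_left_mono)
    finally show ?thesis .
  qed
  ultimately show ?thesis
    unfolding R_def by (meson mult_left_mono norm_ge_zero order_trans)
qed

lemma entire_signed_zeros_growth_bound:
  fixes f :: "complex \<Rightarrow> complex" and lam :: "nat \<Rightarrow> real"
  assumes "f holomorphic_on UNIV" "f z0 \<noteq> 0" "\<rho> > 0"
    and "strict_mono lam" "\<forall>k. lam k > 0" "\<forall>s\<in>{-1, 1}. \<forall>k. f (of_real (s * lam k)) = 0"
    and "\<forall>z. norm (f z) \<le> C * exp (b * norm z powr \<rho>)"
  obtains A where "A > 0" "\<forall>k. A * exp (2 * real k / \<rho>) \<le> exp (b * exp 1 * lam k powr \<rho>)"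
proof -
  obtain m F where F: "F holomorphic_on UNIV" "F 0 \<noteq> 0" "\<forall>z. z \<noteq> 0 \<longrightarrow> F z = f z / z ^ m"
    by (rule entire_divide_zero_power[OF assms(1), where \<xi> = 0]) (use assms(2) in auto)
  have "0 < C * exp (b * norm z0 powr \<rho>)"
    using assms(2) assms(7)[rule_format, of z0] by (meson less_le_trans zero_less_norm_iff)
  then have "C > 0" by (simp add: zero_less_mult_iff)
  \<comment> \<open>The radius factor t maximising 2 ln t - b t^\<rho> c^\<rho> is e^(1/\<rho>) exactly at the
    critical density c^\<rho> = 2 / (b \<rho> e).\<close>
  define t where "t = exp (1 / \<rho>)"
  have "t > 1" using \<open>\<rho> > 0\<close> by (simp add: t_def)
  have lam_pos: "lam k > 0" for k using assms(5) by simp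
  have bound: "norm (F 0) * (t * lam 0) ^ m * exp (2 * real k / \<rho>) \<le> C * exp (b * exp 1 * lam k powr \<rho>)"
    for k
  proof -
    have "exp (2 * real k / \<rho>) = t ^ (2 * k)"
      by (simp add: t_def flip: exp_of_nat_mult)
    also have "\<dots> \<le> t ^ (2 * (k + 1))"
      using \<open>t > 1\<close> by (intro power_increasing) auto
    finally have "exp (2 * real k / \<rho>) \<le> t ^ (2 * (k + 1))" .
    moreover have "(t * lam 0) ^ m \<le> (t * lam k) ^ m"
      using \<open>t > 1\<close> assms(4) lam_pos[of 0] by (intro power_mono) (auto simp: strict_mono_less_eq)
    ultimately have "(t * lam 0) ^ m * exp (2 * real k / \<rho>) \<le> (t * lam k) ^ m * t ^ (2 * (k + 1))"
      using \<open>t > 1\<close> lam_pos[of k] by (intro mult_mono) auto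
    then have "norm (F 0) * (t * lam 0) ^ m * exp (2 * real k / \<rho>)
        \<le> (t * lam k) ^ m * (norm (F 0) * t ^ (2 * (k + 1)))"
      by (metis mult.assoc mult.left_commute mult_left_mono norm_ge_zero)
    also have "\<dots> \<le> C * exp (b * (t * lam k) powr \<rho>)"
      using norm_center_power_le_of_signed_zeros[OF F(1,3) assms(4,5,6,7) \<open>t > 1\<close>, of k]
        \<open>t > 1\<close> lam_pos[of k] by (simp add: le_divide_eq mult.commute)
    also have "(t * lam k) powr \<rho> = exp 1 * lam k powr \<rho>"
    proof -
      have "t powr \<rho> = exp 1" using \<open>\<rho> > 0\<close> by (simp add: t_def powr_def)
      then show ?thesis using \<open>t > 1\<close> lam_pos[of k] by (simp add: powr_mult)
    qed
    finally show ?thesis by (simp add: mult.assoc)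
  qed
  show ?thesis
  proof
    show "norm (F 0) * (t * lam 0) ^ m / C > 0"
      using F(2) \<open>C > 0\<close> \<open>t > 1\<close> lam_pos by simp
    show "\<forall>k. norm (F 0) * (t * lam 0) ^ m / C * exp (2 * real k / \<rho>) \<le> exp (b * exp 1 * lam k powr \<rho>)"
      using bound \<open>C > 0\<close> by (simp add: field_simps)
  qed
qed

lemma G_space_norm_le:
  assumes "f \<in> G_space a b \<rho>" "a \<ge> 0" "b \<ge> 0" "\<rho> \<ge> 0"
  obtains C where "\<forall>z. norm (f z) \<le> C * exp (b * norm z powr \<rho>)"
proof -
  obtain C where C: "C > 0"
      "\<forall>x y. norm (f (Complex x y)) \<le> C * exp (- a * \<bar>x\<bar> powr \<rho> + b * \<bar>y\<bar> powr \<rho>)"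
    using assms(1) by (auto simp: G_space_def)
  have "norm (f z) \<le> C * exp (b * norm z powr \<rho>)" for z
  proof -
    have "\<bar>Im z\<bar> powr \<rho> \<le> norm z powr \<rho>"
      using abs_Im_le_cmod assms(4) by (intro powr_mono2) auto
    then have "b * \<bar>Im z\<bar> powr \<rho> \<le> b * norm z powr \<rho>"
      using assms(3) by (rule mult_left_mono)
    moreover have "0 \<le> a * \<bar>Re z\<bar> powr \<rho>"
      using assms(2) by simp
    ultimately have "- a * \<bar>Re z\<bar> powr \<rho> + b * \<bar>Im z\<bar> powr \<rho> \<le> b * norm z powr \<rho>"
      by linarith
    then have "C * exp (- a * \<bar>Re z\<bar> powr \<rho> + b * \<bar>Im z\<bar> powr \<rho>) \<le> C * exp (b * norm z powr \<rho>)"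
      using C(1) by simp
    moreover have "norm (f z) \<le> C * exp (- a * \<bar>Re z\<bar> powr \<rho> + b * \<bar>Im z\<bar> powr \<rho>)"
      using C(2)[rule_format, of "Re z" "Im z"] by simp
    ultimately show ?thesis by linarith
  qed
  then show ?thesis using that by blast
qed

lemma frequently_less_of_Liminf_less:
  fixes X :: "'a \<Rightarrow> real"
  assumes "Liminf F (\<lambda>x. ereal (X x)) < ereal d"
  obtains c where "c < d" "\<exists>\<^sub>F x in F. X x < c"
proof -
  obtain e where e: "Liminf F (\<lambda>x. ereal (X x)) < e" "e < ereal d"
    using assms ereal_dense2 by blast
  then obtain y where y: "y < e" "\<exists>\<^sub>F x in F. ereal (X x) \<le> y"
    by (auto simp: not_le[symmetric] le_Liminf_iff not_eventually)
  obtain c where c: "y < ereal c" "ereal c < e"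
    using y(1) ereal_dense2 by blast
  have "c < d" using c(2) e(2) by (metis less_ereal.simps(1) order.strict_trans)
  moreover have "\<exists>\<^sub>F x in F. X x < c"
    using y(2) by (rule frequently_elim1) (use c(1) in \<open>metis le_less_trans less_ereal.simps(1)\<close>)
  ultimately show ?thesis using that by blast
qed

lemma exp_bound_fails_of_liminf_less:
  fixes lam :: "nat \<Rightarrow> real"
  assumes "\<rho> > 0" "b > 0" "A > 0" "\<forall>k. lam k > 0"
    and "liminf (\<lambda>k. ereal (lam k / real k powr (1 / \<rho>)))
           < ereal ((2 / (b * \<rho> * exp 1)) powr (1 / \<rho>))"
  obtains k where "exp (b * exp 1 * lam k powr \<rho>) < A * exp (2 * real k / \<rho>)"
proof -
  define c0 where "c0 = (2 / (b * \<rho> * exp 1)) powr (1 / \<rho>)"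
  have "c0 > 0" using assms(1,2) by (simp add: c0_def)
  obtain c1 where c1: "c1 < c0" "\<exists>\<^sub>F k in sequentially. lam k / real k powr (1 / \<rho>) < c1"
    using assms(5) unfolding c0_def by (rule frequently_less_of_Liminf_less)
  define c where "c = max c1 (c0 / 2)"
  have c: "0 < c" "c < c0" using c1(1) \<open>c0 > 0\<close> by (auto simp: c_def)
  have "c powr \<rho> < c0 powr \<rho>"
    using c assms(1) by (intro powr_less_mono2) auto
  also have "c0 powr \<rho> = 2 / (b * \<rho> * exp 1)"
    using assms(1,2) by (simp add: c0_def powr_powr)
  finally have "b * exp 1 * c powr \<rho> < 2 / \<rho>"
    using assms(1,2) by (simp add: field_simps)
  define \<delta> where "\<delta> = 2 / \<rho> - b * exp 1 * c powr \<rho>"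
  have "\<delta> > 0" using \<open>b * exp 1 * c powr \<rho> < 2 / \<rho>\<close> by (simp add: \<delta>_def)
  have "((\<lambda>k. exp (- \<delta> * real k)) \<longlongrightarrow> 0) sequentially"
    using \<open>\<delta> > 0\<close> by real_asymp
  then have "\<forall>\<^sub>F k in sequentially. exp (- \<delta> * real k) < A"
    using assms(3) by (rule order_tendstoD(2))
  then have "\<forall>\<^sub>F k in sequentially. exp (- \<delta> * real k) < A \<and> k > 0"
    using eventually_gt_at_top by (rule eventually_conj)
  moreover have "\<exists>\<^sub>F k in sequentially. lam k / real k powr (1 / \<rho>) < c"
    using c1(2) by (rule frequently_elim1) (simp add: c_def)
  ultimately obtain k where k: "exp (- \<delta> * real k) < A" "k > 0" "lam k / real k powr (1 / \<rho>) < c"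
    using frequently_eventually_frequently frequently_ex by (metis (mono_tags, lifting))
  have "lam k < c * real k powr (1 / \<rho>)"
    using k(2,3) by (simp add: divide_less_eq)
  then have "lam k powr \<rho> < (c * real k powr (1 / \<rho>)) powr \<rho>"
    using assms(1) assms(4)[rule_format, of k] by (intro powr_less_mono2) auto
  also have "\<dots> = c powr \<rho> * real k"
    using c(1) assms(1) by (simp add: powr_mult powr_powr)
  finally have "b * exp 1 * lam k powr \<rho> < 2 * real k / \<rho> - \<delta> * real k"
    using assms(2) by (simp add: \<delta>_def algebra_simps)
  then have "exp (b * exp 1 * lam k powr \<rho>) < exp (2 * real k / \<rho>) * exp (- \<delta> * real k)"
    by (simp add: flip: exp_add)
  also have "\<dots> < exp (2 * real k / \<rho>) * A"
    using k(1) by simp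
  finally show ?thesis using that by (simp add: mult.commute)
qed

theorem proposition1:
  fixes \<rho> a b :: real and lam :: "nat \<Rightarrow> real"
  assumes "\<rho> > 1" and "a > 0" and "b > 0"
    and "strict_mono lam" and "\<And>k. lam k > 0"
    and "liminf (\<lambda>k. ereal (lam k / real k powr (1 / \<rho>)))
           < ereal ((2 / (b * \<rho> * exp 1)) powr (1 / \<rho>))"
  shows "uniqueness_set {complex_of_real (s * lam k) | s k. s \<in> {-1, 1}} (G_space a b \<rho>)"
  unfolding uniqueness_set_def
proof (intro ballI impI allI)
  fix f z
  assume f: "f \<in> G_space a b \<rho>"
    and zeros: "\<forall>w\<in>{complex_of_real (s * lam k) | s k. s \<in> {-1, 1}}. f w = 0"
  show "f z = 0"
  proof (rule ccontr)
    assume "f z \<noteq> 0"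
    obtain C where C: "\<forall>z. norm (f z) \<le> C * exp (b * norm z powr \<rho>)"
      by (rule G_space_norm_le[OF f]) (use assms in auto)
    obtain A where A: "A > 0" "\<forall>k. A * exp (2 * real k / \<rho>) \<le> exp (b * exp 1 * lam k powr \<rho>)"
    proof (rule entire_signed_zeros_growth_bound)
      show "f holomorphic_on UNIV" using f by (simp add: G_space_def)
      show "\<forall>s\<in>{-1, 1}. \<forall>k. f (of_real (s * lam k)) = 0" using zeros by blast
    qed (use \<open>f z \<noteq> 0\<close> assms C in auto)
    obtain k where "exp (b * exp 1 * lam k powr \<rho>) < A * exp (2 * real k / \<rho>)"
      by (rule exp_bound_fails_of_liminf_less[where A = A]) (use assms A in auto)
    with A(2) show False by (meson not_le)
  qed
qed

end
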